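(* Let $\{\mathbb{G}_n,\ n=2,3,\ldots\}$ be a sequence of random graphs as described in the context, with $\lim_{n\to\infty}|V_n|=\infty$ (no homogeneity assumption). For each $n$, let $(\nu_n,\mu_n)$ be a random pair uniformly distributed over $\Sigma_n=\{(k,\ell)\in V_n\times V_n: k\ne\ell\}$, i.e. $\mathbb{P}[\nu_n=k,\mu_n=\ell]=\frac{1}{|V_n|(|V_n|-1)}$ for distinct $k,\ell\in V_n$, and independent of $\mathbb{G}_n$. Fix $d\in\{0,1,\ldots\}$. Then $P_n(d)\to L(d)$ in probability for some scalar $L(d)\in\mathbb{R}$ if and only if $$\lim_{n\to\infty}\mathbb{P}[D_{n,\nu_n}=d]=L(d)\quad\text{and}\quad\lim_{n\to\infty}\mathrm{Cov}\big[\mathbf{1}[D_{n,\nu_n}=d],\mathbf{1}[D_{n,\mu_n}=d]\big]=0.$$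
   Context: All random variables are defined on a common probability space $(\Omega,\mathcal{F},\mathbb{P})$. For each $n=2,3,\ldots$, $\mathbb{G}_n$ is a random (possibly directed, self-loops allowed) graph on a deterministic finite node set $V_n$ with $|V_n|\ge 2$, determined by $\{0,1\}$-valued edge random variables $\{\chi_n(k,\ell),\ k,\ell\in V_n\}$ ($\chi_n(k,\ell)=1$ iff there is an edge from $k$ to $\ell$). The degree of node $k$ is $D_{n,k}=\sum_{\ell\in V_n}\chi_n(k,\ell)$. For $d=0,1,\ldots$, $N_n(d)=\sum_{k\in V_n}\mathbf{1}[D_{n,k}=d]$ and $P_n(d)=N_n(d)/|V_n|$. *)

theory Defs
  imports "HOL-Probability.Probability"
begin

definition covariance :: "'a measure \<Rightarrow> ('a \<Rightarrow> real) \<Rightarrow> ('a \<Rightarrow> real) \<Rightarrow> real" where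
  "covariance M X Y =
     (\<integral>\<omega>. (X \<omega> - (\<integral>\<omega>'. X \<omega>' \<partial>M)) * (Y \<omega> - (\<integral>\<omega>'. Y \<omega>' \<partial>M)) \<partial>M)"

definition conv_in_prob :: "'a measure \<Rightarrow> (nat \<Rightarrow> 'a \<Rightarrow> real) \<Rightarrow> real \<Rightarrow> bool" where
  "conv_in_prob M X c \<longleftrightarrow>
     (\<forall>\<epsilon>>0. (\<lambda>n. measure M {\<omega> \<in> space M. \<bar>X n \<omega> - c\<bar> > \<epsilon>}) \<longlonglongrightarrow> 0)"

definition degree :: "(nat \<Rightarrow> 'v set) \<Rightarrow> (nat \<Rightarrow> 'v \<Rightarrow> 'v \<Rightarrow> 'a \<Rightarrow> nat) \<Rightarrow> nat \<Rightarrow> 'v \<Rightarrow> 'a \<Rightarrow> nat" where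
  "degree V ch n k \<omega> = (\<Sum>l\<in>V n. ch n k l \<omega>)"

definition emp_deg :: "(nat \<Rightarrow> 'v set) \<Rightarrow> (nat \<Rightarrow> 'v \<Rightarrow> 'v \<Rightarrow> 'a \<Rightarrow> nat) \<Rightarrow> nat \<Rightarrow> nat \<Rightarrow> 'a \<Rightarrow> real" where
  "emp_deg V ch n d \<omega> = real (card {k \<in> V n. degree V ch n k \<omega> = d}) / real (card (V n))"

text \<open>Edge set of G_n (the random graph as a random object).\<close>
definition edge_set :: "(nat \<Rightarrow> 'v set) \<Rightarrow> (nat \<Rightarrow> 'v \<Rightarrow> 'v \<Rightarrow> 'a \<Rightarrow> nat) \<Rightarrow> nat \<Rightarrow> 'a \<Rightarrow> ('v \<times> 'v) set" where
  "edge_set V ch n \<omega> = {(k, l) \<in> V n \<times> V n. ch n k l \<omega> = 1}"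

end

theory Submission
  imports Defs
begin

text \<open>
  The empirical frequency P_n(d) is the mean over k of the indicators 1[D_{n,k} = d]. Being
  bounded, it converges in probability to L iff E[(P_n(d) - L)^2] = Var P_n(d) + (E P_n(d) - L)^2
  tends to 0, i.e. iff E P_n(d) tends to L and Var P_n(d) tends to 0. A node, or an ordered pair of
  distinct nodes, drawn uniformly and independently of the graph turns these moments into the
  quantities of the statement: E P_n(d) = P[D_{n,\<nu>} = d] exactly, and the covariance of the
  indicators at \<nu>_n and \<mu>_n differs from Var P_n(d) only through the diagonal terms k = l of
  E[P_n(d)^2], which contribute at most 1 / (|V_n| - 1).
\<close>

section \<open>Convergence in probability of bounded random variables\<close>

context prob_space
begin

lemma integrable_square_if_bounded:
  fixes X :: "'a \<Rightarrow> real"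
  assumes "X \<in> borel_measurable M" and bounded: "\<And>\<omega>. \<omega> \<in> space M \<Longrightarrow> \<bar>X \<omega>\<bar> \<le> B"
  shows "integrable M (\<lambda>\<omega>. (X \<omega>)\<^sup>2)"
proof (rule integrable_const_bound[where B = "B\<^sup>2"])
  show "AE \<omega> in M. norm ((X \<omega>)\<^sup>2) \<le> B\<^sup>2"
    using bounded by (intro AE_I2) (metis abs_ge_zero power2_abs power_mono real_norm_def abs_power2)
qed (use assms(1) in simp)

lemma mean_square_le_tail:
  fixes X :: "'a \<Rightarrow> real"
  assumes [measurable]: "X \<in> borel_measurable M"
    and bound: "\<And>\<omega>. \<omega> \<in> space M \<Longrightarrow> \<bar>X \<omega> - L\<bar> \<le> C"
  shows "expectation (\<lambda>\<omega>. (X \<omega> - L)\<^sup>2) \<le> \<delta>\<^sup>2 + C\<^sup>2 * prob {\<omega> \<in> space M. \<bar>X \<omega> - L\<bar> > \<delta>}"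
proof -
  define S where "S = {\<omega> \<in> space M. \<bar>X \<omega> - L\<bar> > \<delta>}"
  have [measurable]: "S \<in> events" unfolding S_def by measurable
  have "(X \<omega> - L)\<^sup>2 \<le> \<delta>\<^sup>2 + C\<^sup>2 * indicator S \<omega>" if "\<omega> \<in> space M" for \<omega>
  proof (cases "\<omega> \<in> S")
    case True
    then show ?thesis
      using power_mono[OF bound[OF that] abs_ge_zero, of 2] by (simp add: add_increasing)
  next
    case False
    then have "\<bar>X \<omega> - L\<bar> \<le> \<bar>\<delta>\<bar>" using that unfolding S_def by auto
    then show ?thesis using False power_mono[OF _ abs_ge_zero, of "\<bar>X \<omega> - L\<bar>" "\<bar>\<delta>\<bar>" 2] by simp
  qed
  moreover have "integrable M (\<lambda>\<omega>. (X \<omega> - L)\<^sup>2)"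
    using bound by (intro integrable_square_if_bounded) auto
  ultimately have "expectation (\<lambda>\<omega>. (X \<omega> - L)\<^sup>2) \<le> expectation (\<lambda>\<omega>. \<delta>\<^sup>2 + C\<^sup>2 * indicator S \<omega>)"
    by (intro integral_mono Bochner_Integration.integrable_add integrable_mult_right
        integrable_real_indicator) (auto simp: less_top[symmetric])
  also have "\<dots> = \<delta>\<^sup>2 + C\<^sup>2 * prob S"
    by (subst Bochner_Integration.integral_add) (auto simp: prob_space less_top[symmetric] Int_absorb2 sets.sets_into_space)
  finally show ?thesis unfolding S_def .
qed

lemma conv_in_prob_iff_mean_square:
  fixes X :: "nat \<Rightarrow> 'a \<Rightarrow> real"
  assumes bounded: "\<forall>\<^sub>F n in sequentially.
    X n \<in> borel_measurable M \<and> (\<forall>\<omega>\<in>space M. \<bar>X n \<omega>\<bar> \<le> B)"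
  shows "conv_in_prob M X L \<longleftrightarrow> (\<lambda>n. expectation (\<lambda>\<omega>. (X n \<omega> - L)\<^sup>2)) \<longlonglongrightarrow> 0"
proof
  assume conv: "conv_in_prob M X L"
  define C where "C = \<bar>B\<bar> + \<bar>L\<bar>"
  show "(\<lambda>n. expectation (\<lambda>\<omega>. (X n \<omega> - L)\<^sup>2)) \<longlonglongrightarrow> 0"
  proof (rule tendstoI)
    fix \<epsilon> :: real assume "\<epsilon> > 0"
    define \<delta> where "\<delta> = sqrt (\<epsilon> / 2)"
    have "\<delta> > 0" "\<delta>\<^sup>2 = \<epsilon> / 2" using \<open>\<epsilon> > 0\<close> unfolding \<delta>_def by auto
    then have "(\<lambda>n. C\<^sup>2 * prob {\<omega> \<in> space M. \<bar>X n \<omega> - L\<bar> > \<delta>}) \<longlonglongrightarrow> C\<^sup>2 * 0"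
      using conv unfolding conv_in_prob_def by (intro tendsto_mult_left) blast
    then have "\<forall>\<^sub>F n in sequentially. C\<^sup>2 * prob {\<omega> \<in> space M. \<bar>X n \<omega> - L\<bar> > \<delta>} < \<epsilon> / 2"
      using \<open>\<epsilon> > 0\<close> by (intro order_tendstoD(2)) auto
    with bounded show "\<forall>\<^sub>F n in sequentially. dist (expectation (\<lambda>\<omega>. (X n \<omega> - L)\<^sup>2)) 0 < \<epsilon>"
    proof eventually_elim
      case (elim n)
      then have "\<forall>\<omega>\<in>space M. \<bar>X n \<omega> - L\<bar> \<le> C"
        unfolding C_def by (auto intro: order_trans[OF abs_triangle_ineq4])
      then have "expectation (\<lambda>\<omega>. (X n \<omega> - L)\<^sup>2) < \<epsilon>"
        using mean_square_le_tail[of "X n" L C \<delta>] elim \<open>\<delta>\<^sup>2 = \<epsilon> / 2\<close> by auto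
      then show ?case by simp
    qed
  qed
next
  assume mean_square: "(\<lambda>n. expectation (\<lambda>\<omega>. (X n \<omega> - L)\<^sup>2)) \<longlonglongrightarrow> 0"
  show "conv_in_prob M X L" unfolding conv_in_prob_def
  proof (intro allI impI)
    fix \<epsilon> :: real assume "\<epsilon> > 0"
    have "\<forall>\<^sub>F n in sequentially. 0 \<le> prob {\<omega> \<in> space M. \<bar>X n \<omega> - L\<bar> > \<epsilon>}"
      by simp
    moreover have "\<forall>\<^sub>F n in sequentially.
      prob {\<omega> \<in> space M. \<bar>X n \<omega> - L\<bar> > \<epsilon>} \<le> expectation (\<lambda>\<omega>. (X n \<omega> - L)\<^sup>2) / \<epsilon>\<^sup>2"
      using bounded
    proof eventually_elim
      case (elim n)
      then have [measurable]: "X n \<in> borel_measurable M" by simp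
      have "\<bar>X n \<omega> - L\<bar> \<le> B + \<bar>L\<bar>" if "\<omega> \<in> space M" for \<omega>
        using elim that by (auto intro: order_trans[OF abs_triangle_ineq4])
      then have "integrable M (\<lambda>\<omega>. (X n \<omega> - L)\<^sup>2)"
        by (intro integrable_square_if_bounded) auto
      have "prob {\<omega> \<in> space M. \<bar>X n \<omega> - L\<bar> > \<epsilon>} \<le> prob {\<omega> \<in> space M. \<bar>X n \<omega> - L\<bar> \<ge> \<epsilon>}"
        by (intro finite_measure_mono) auto
      also have "\<dots> \<le> expectation (\<lambda>\<omega>. (X n \<omega> - L)\<^sup>2) / \<epsilon>\<^sup>2"
        using \<open>\<epsilon> > 0\<close> \<open>integrable M _\<close> by (intro second_moment_method) auto
      finally show ?case .
    qed
    moreover have "(\<lambda>n. expectation (\<lambda>\<omega>. (X n \<omega> - L)\<^sup>2) / \<epsilon>\<^sup>2) \<longlonglongrightarrow> 0"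
      using tendsto_divide_zero[OF mean_square] by simp
    ultimately show "(\<lambda>n. prob {\<omega> \<in> space M. \<bar>X n \<omega> - L\<bar> > \<epsilon>}) \<longlonglongrightarrow> 0"
      by (rule tendsto_sandwich[OF _ _ tendsto_const])
  qed
qed

lemma mean_square_eq_variance_plus_bias:
  fixes X :: "'a \<Rightarrow> real"
  assumes [measurable]: "X \<in> borel_measurable M" and bounded: "\<forall>\<omega>\<in>space M. \<bar>X \<omega>\<bar> \<le> B"
  shows "expectation (\<lambda>\<omega>. (X \<omega> - L)\<^sup>2) = variance X + (expectation X - L)\<^sup>2"
proof -
  have [simp]: "integrable M (\<lambda>\<omega>. (X \<omega>)\<^sup>2)"
    using bounded by (intro integrable_square_if_bounded) auto
  have [simp]: "integrable M X"
    using bounded by (intro integrable_const_bound[where B = B] AE_I2) auto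
  have "expectation (\<lambda>\<omega>. (X \<omega> - L)\<^sup>2) = expectation (\<lambda>\<omega>. (X \<omega>)\<^sup>2 - 2 * L * X \<omega> + L\<^sup>2)"
    by (intro Bochner_Integration.integral_cong) (auto simp: power2_diff)
  also have "\<dots> = expectation (\<lambda>\<omega>. (X \<omega>)\<^sup>2) - 2 * L * expectation X + L\<^sup>2"
    by (simp add: prob_space)
  finally show ?thesis
    by (simp add: variance_eq power2_diff prob_space algebra_simps flip: power2_eq_square)
qed

end

lemma tendsto_nonneg_plus_square_iff:
  fixes w e :: "'b \<Rightarrow> real"
  assumes "\<forall>\<^sub>F x in F. 0 \<le> w x"
  shows "((\<lambda>x. w x + (e x - L)\<^sup>2) \<longlongrightarrow> 0) F \<longleftrightarrow> (e \<longlongrightarrow> L) F \<and> (w \<longlongrightarrow> 0) F"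
proof
  assume sum: "((\<lambda>x. w x + (e x - L)\<^sup>2) \<longlongrightarrow> 0) F"
  have "(w \<longlongrightarrow> 0) F"
    using assms by (intro tendsto_sandwich[OF _ _ tendsto_const sum]) (auto elim: eventually_mono)
  moreover have "((\<lambda>x. (e x - L)\<^sup>2) \<longlongrightarrow> 0) F"
    using assms by (intro tendsto_sandwich[OF _ _ tendsto_const sum]) (auto elim: eventually_mono)
  then have "((\<lambda>x. \<bar>e x - L\<bar>) \<longlongrightarrow> 0) F"
    using tendsto_real_sqrt by fastforce
  then have "(e \<longlongrightarrow> L) F"
    by (simp add: tendsto_rabs_zero_iff LIM_zero_iff)
  ultimately show "(e \<longlongrightarrow> L) F \<and> (w \<longlongrightarrow> 0) F" by simp
next
  assume "(e \<longlongrightarrow> L) F \<and> (w \<longlongrightarrow> 0) F"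
  then show "((\<lambda>x. w x + (e x - L)\<^sup>2) \<longlongrightarrow> 0) F"
    by (auto intro!: tendsto_eq_intros)
qed

section \<open>Sampling a uniform pair of distinct indices\<close>

definition empirical_frequency :: "'v set \<Rightarrow> ('v \<Rightarrow> 'a \<Rightarrow> bool) \<Rightarrow> 'a \<Rightarrow> real" where
  "empirical_frequency W P \<omega> = real (card {k \<in> W. P k \<omega>}) / real (card W)"

lemma empirical_frequency_eq_sum:
  "finite W \<Longrightarrow> empirical_frequency W P \<omega> = (\<Sum>k\<in>W. of_bool (P k \<omega>)) / real (card W)"
  by (simp add: empirical_frequency_def Int_def conj_commute)

lemma empirical_frequency_bounds:
  assumes "finite W"
  shows "0 \<le> empirical_frequency W P \<omega>" "empirical_frequency W P \<omega> \<le> 1"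
  using card_mono[OF assms, of "{k \<in> W. P k \<omega>}"]
  by (auto simp: empirical_frequency_def divide_le_eq_1)

lemma sum_off_diagonal:
  fixes f :: "'v \<Rightarrow> 'v \<Rightarrow> 'b::ab_group_add"
  assumes "finite W"
  shows "(\<Sum>(k, l)\<in>{(k, l) \<in> W \<times> W. k \<noteq> l}. f k l) = (\<Sum>k\<in>W. \<Sum>l\<in>W. f k l) - (\<Sum>k\<in>W. f k k)"
proof -
  have "{(k, l) \<in> W \<times> W. k \<noteq> l} = W \<times> W - (\<lambda>k. (k, k)) ` W" by auto
  moreover have "(\<Sum>(k, l)\<in>W \<times> W - (\<lambda>k. (k, k)) ` W. f k l)
      = (\<Sum>(k, l)\<in>W \<times> W. f k l) - (\<Sum>(k, l)\<in>(\<lambda>k. (k, k)) ` W. f k l)"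
    using assms by (intro sum_diff) auto
  ultimately have "(\<Sum>(k, l)\<in>{(k, l) \<in> W \<times> W. k \<noteq> l}. f k l)
      = (\<Sum>(k, l)\<in>W \<times> W. f k l) - (\<Sum>(k, l)\<in>(\<lambda>k. (k, k)) ` W. f k l)"
    by simp
  also have "\<dots> = (\<Sum>k\<in>W. \<Sum>l\<in>W. f k l) - (\<Sum>k\<in>W. f k k)"
    by (simp add: sum.cartesian_product sum.reindex inj_on_def)
  finally show ?thesis .
qed

context prob_space
begin

lemma expectation_of_bool:
  assumes "{\<omega> \<in> space M. Q \<omega>} \<in> events"
  shows "integrable M (\<lambda>\<omega>. of_bool (Q \<omega>) :: real)"
    and "expectation (\<lambda>\<omega>. of_bool (Q \<omega>)) = prob {\<omega> \<in> space M. Q \<omega>}"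
proof -
  have eq: "\<And>\<omega>. \<omega> \<in> space M \<Longrightarrow> of_bool (Q \<omega>) = (indicator {\<omega> \<in> space M. Q \<omega>} \<omega> :: real)"
    by simp
  show "integrable M (\<lambda>\<omega>. of_bool (Q \<omega>) :: real)"
    using assms by (subst Bochner_Integration.integrable_cong[OF refl eq]) (auto simp: less_top[symmetric])
  show "expectation (\<lambda>\<omega>. of_bool (Q \<omega>)) = prob {\<omega> \<in> space M. Q \<omega>}"
    using assms by (subst Bochner_Integration.integral_cong[OF refl eq]) auto
qed

lemma covariance_eq:
  assumes "integrable M X" "integrable M Y" "integrable M (\<lambda>\<omega>. X \<omega> * Y \<omega>)"
  shows "covariance M X Y = expectation (\<lambda>\<omega>. X \<omega> * Y \<omega>) - expectation X * expectation Y"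
proof -
  have "covariance M X Y = expectation (\<lambda>\<omega>. X \<omega> * Y \<omega> - expectation Y * X \<omega>
      - expectation X * Y \<omega> + expectation X * expectation Y)"
    unfolding covariance_def by (intro Bochner_Integration.integral_cong) (auto simp: algebra_simps)
  also have "\<dots> = expectation (\<lambda>\<omega>. X \<omega> * Y \<omega>) - expectation X * expectation Y"
    using assms by (simp add: prob_space)
  finally show ?thesis .
qed

lemma prob_at_independent_index:
  fixes Z :: "'a \<Rightarrow> 'i" and Q :: "'i \<Rightarrow> 'a \<Rightarrow> bool"
  assumes "finite S" and Z: "Z \<in> measurable M (count_space S)"
    and Q_events: "\<And>s. s \<in> S \<Longrightarrow> {\<omega> \<in> space M. Q s \<omega>} \<in> events"
    and indep: "\<And>s. s \<in> S \<Longrightarrow> prob {\<omega> \<in> space M. Z \<omega> = s \<and> Q s \<omega>}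
                  = prob {\<omega> \<in> space M. Z \<omega> = s} * prob {\<omega> \<in> space M. Q s \<omega>}"
  shows "{\<omega> \<in> space M. Q (Z \<omega>) \<omega>} \<in> events"
    and "prob {\<omega> \<in> space M. Q (Z \<omega>) \<omega>}
           = (\<Sum>s\<in>S. prob {\<omega> \<in> space M. Z \<omega> = s} * prob {\<omega> \<in> space M. Q s \<omega>})"
proof -
  have "{\<omega> \<in> space M. Z \<omega> = s} \<in> events" if "s \<in> S" for s
    using measurable_sets[OF Z, of "{s}"] that by (simp add: vimage_def Int_def conj_commute)
  then have pieces: "(\<lambda>s. {\<omega> \<in> space M. Z \<omega> = s \<and> Q s \<omega>}) ` S \<subseteq> events"
    using Q_events by (auto simp flip: Collect_conj_eq[of "\<lambda>\<omega>. \<omega> \<in> space M \<and> Z \<omega> = _"])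
  have union: "{\<omega> \<in> space M. Q (Z \<omega>) \<omega>} = (\<Union>s\<in>S. {\<omega> \<in> space M. Z \<omega> = s \<and> Q s \<omega>})"
    using measurable_space[OF Z] by auto
  show "{\<omega> \<in> space M. Q (Z \<omega>) \<omega>} \<in> events"
    unfolding union using \<open>finite S\<close> pieces by blast
  have "prob {\<omega> \<in> space M. Q (Z \<omega>) \<omega>} = (\<Sum>s\<in>S. prob {\<omega> \<in> space M. Z \<omega> = s \<and> Q s \<omega>})"
    unfolding union using \<open>finite S\<close> pieces
    by (intro finite_measure_finite_Union) (auto simp: disjoint_family_on_def)
  then show "prob {\<omega> \<in> space M. Q (Z \<omega>) \<omega>}
           = (\<Sum>s\<in>S. prob {\<omega> \<in> space M. Z \<omega> = s} * prob {\<omega> \<in> space M. Q s \<omega>})"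
    by (simp add: indep)
qed

lemma empirical_frequency_moments:
  assumes "finite W" and P_events: "\<And>k. k \<in> W \<Longrightarrow> {\<omega> \<in> space M. P k \<omega>} \<in> events"
  shows "empirical_frequency W P \<in> borel_measurable M"
    and "expectation (empirical_frequency W P) = (\<Sum>k\<in>W. prob {\<omega> \<in> space M. P k \<omega>}) / real (card W)"
    and "expectation (\<lambda>\<omega>. (empirical_frequency W P \<omega>)\<^sup>2)
           = (\<Sum>k\<in>W. \<Sum>l\<in>W. prob {\<omega> \<in> space M. P k \<omega> \<and> P l \<omega>}) / (real (card W))\<^sup>2"
proof -
  have PP_events: "{\<omega> \<in> space M. P k \<omega> \<and> P l \<omega>} \<in> events" if "k \<in> W" "l \<in> W" for k l
    using sets.Int[OF P_events[OF that(1)] P_events[OF that(2)]] by (simp add: Collect_conj_eq[symmetric] Int_def conj_ac)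
  have freq: "empirical_frequency W P = (\<lambda>\<omega>. (\<Sum>k\<in>W. of_bool (P k \<omega>)) / real (card W))"
    using \<open>finite W\<close> by (simp add: empirical_frequency_eq_sum fun_eq_iff)
  have square: "(empirical_frequency W P \<omega>)\<^sup>2
      = (\<Sum>k\<in>W. \<Sum>l\<in>W. of_bool (P k \<omega> \<and> P l \<omega>)) / (real (card W))\<^sup>2" for \<omega>
    by (simp add: freq power2_eq_square sum_product of_bool_conj)
  show "empirical_frequency W P \<in> borel_measurable M"
    unfolding freq using expectation_of_bool(1)[OF P_events]
    by (intro borel_measurable_divide borel_measurable_sum borel_measurable_integrable) auto
  show "expectation (empirical_frequency W P) = (\<Sum>k\<in>W. prob {\<omega> \<in> space M. P k \<omega>}) / real (card W)"
    unfolding freq using expectation_of_bool[OF P_events] by (simp add: integral_divide_zero)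
  show "expectation (\<lambda>\<omega>. (empirical_frequency W P \<omega>)\<^sup>2)
           = (\<Sum>k\<in>W. \<Sum>l\<in>W. prob {\<omega> \<in> space M. P k \<omega> \<and> P l \<omega>}) / (real (card W))\<^sup>2"
    unfolding square using expectation_of_bool[OF PP_events] by (simp add: integral_divide_zero)
qed

end

locale uniform_pair_sample = prob_space +
  fixes W :: "'v set" and P :: "'v \<Rightarrow> 'a \<Rightarrow> bool" and Z :: "'a \<Rightarrow> 'v \<times> 'v"
  assumes finite_W: "finite W" and card_W: "card W \<ge> 2"
    and P_events: "\<And>k. k \<in> W \<Longrightarrow> {\<omega> \<in> space M. P k \<omega>} \<in> events"
    and Z_rv: "Z \<in> measurable M (count_space {(k, l) \<in> W \<times> W. k \<noteq> l})"
    and Z_uniform: "\<And>s. s \<in> {(k, l) \<in> W \<times> W. k \<noteq> l} \<Longrightarrow>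
          prob {\<omega> \<in> space M. Z \<omega> = s} = 1 / (real (card W) * (real (card W) - 1))"
    and Z_indep: "\<And>s k l. s \<in> {(k, l) \<in> W \<times> W. k \<noteq> l} \<Longrightarrow> k \<in> W \<Longrightarrow> l \<in> W \<Longrightarrow>
          prob {\<omega> \<in> space M. Z \<omega> = s \<and> P k \<omega> \<and> P l \<omega>}
            = prob {\<omega> \<in> space M. Z \<omega> = s} * prob {\<omega> \<in> space M. P k \<omega> \<and> P l \<omega>}"
begin

text \<open>By linearity, these are \<open>E[N]\<close> and \<open>E[N\<^sup>2]\<close> for the count \<open>N = #{k \<in> W. P k}\<close>.\<close>

definition expected_count :: real where
  "expected_count = (\<Sum>k\<in>W. prob {\<omega> \<in> space M. P k \<omega>})"

definition expected_count_square :: real where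
  "expected_count_square = (\<Sum>k\<in>W. \<Sum>l\<in>W. prob {\<omega> \<in> space M. P k \<omega> \<and> P l \<omega>})"

lemma card_W_real: "real (card W) \<ge> 2"
  using card_W by simp

lemma expected_count_bounds:
  "0 \<le> expected_count" "expected_count \<le> real (card W)"
  "0 \<le> expected_count_square" "expected_count_square \<le> (real (card W))\<^sup>2"
proof -
  have row: "(\<Sum>l\<in>W. prob {\<omega> \<in> space M. P k \<omega> \<and> P l \<omega>}) \<le> real (card W)" for k
    using sum_bounded_above[where A = W and K = 1 and
        f = "\<lambda>l. prob {\<omega> \<in> space M. P k \<omega> \<and> P l \<omega>}"]
    by simp
  show "0 \<le> expected_count" "expected_count \<le> real (card W)" "0 \<le> expected_count_square"
    unfolding expected_count_def expected_count_square_def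
    using sum_bounded_above[where A = W and K = 1 and f = "\<lambda>k. prob {\<omega> \<in> space M. P k \<omega>}"]
    by (auto intro!: sum_nonneg)
  show "expected_count_square \<le> (real (card W))\<^sup>2"
    unfolding expected_count_square_def power2_eq_square
    using sum_mono[where K = W and g = "\<lambda>_. real (card W)"] row by simp
qed

lemma prob_at_sample:
  assumes ij: "\<And>s. s \<in> {(k, l) \<in> W \<times> W. k \<noteq> l} \<Longrightarrow> i s \<in> W \<and> j s \<in> W"
  shows "{\<omega> \<in> space M. P (i (Z \<omega>)) \<omega> \<and> P (j (Z \<omega>)) \<omega>} \<in> events"
    and "prob {\<omega> \<in> space M. P (i (Z \<omega>)) \<omega> \<and> P (j (Z \<omega>)) \<omega>}
           = (\<Sum>s\<in>{(k, l) \<in> W \<times> W. k \<noteq> l}. prob {\<omega> \<in> space M. P (i s) \<omega> \<and> P (j s) \<omega>})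
             / (real (card W) * (real (card W) - 1))"
proof -
  have finite: "finite {(k, l) \<in> W \<times> W. k \<noteq> l}"
    using finite_W by (auto intro: finite_subset[of _ "W \<times> W"])
  have events: "{\<omega> \<in> space M. P (i s) \<omega> \<and> P (j s) \<omega>} \<in> events"
    if "s \<in> {(k, l) \<in> W \<times> W. k \<noteq> l}" for s
    using sets.Int[OF P_events P_events] ij[OF that] by (simp add: Int_def conj_ac)
  have indep: "prob {\<omega> \<in> space M. Z \<omega> = s \<and> P (i s) \<omega> \<and> P (j s) \<omega>}
      = prob {\<omega> \<in> space M. Z \<omega> = s} * prob {\<omega> \<in> space M. P (i s) \<omega> \<and> P (j s) \<omega>}"
    if "s \<in> {(k, l) \<in> W \<times> W. k \<noteq> l}" for s
    using Z_indep ij[OF that] that by blast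
  note sampled = prob_at_independent_index[where Q = "\<lambda>s \<omega>. P (i s) \<omega> \<and> P (j s) \<omega>",
      OF finite Z_rv events indep]
  show "{\<omega> \<in> space M. P (i (Z \<omega>)) \<omega> \<and> P (j (Z \<omega>)) \<omega>} \<in> events"
    using sampled(1) by simp
  show "prob {\<omega> \<in> space M. P (i (Z \<omega>)) \<omega> \<and> P (j (Z \<omega>)) \<omega>}
           = (\<Sum>s\<in>{(k, l) \<in> W \<times> W. k \<noteq> l}. prob {\<omega> \<in> space M. P (i s) \<omega> \<and> P (j s) \<omega>})
             / (real (card W) * (real (card W) - 1))"
    using sampled(2) Z_uniform by (simp add: sum_divide_distrib)
qed

lemma prob_fst_at_sample: "prob {\<omega> \<in> space M. P (fst (Z \<omega>)) \<omega>} = expected_count / real (card W)"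
  and prob_snd_at_sample: "prob {\<omega> \<in> space M. P (snd (Z \<omega>)) \<omega>} = expected_count / real (card W)"
proof -
  have "(\<Sum>s\<in>{(k, l) \<in> W \<times> W. k \<noteq> l}. prob {\<omega> \<in> space M. P (fst s) \<omega>})
          = real (card W) * expected_count - expected_count"
    and "(\<Sum>s\<in>{(k, l) \<in> W \<times> W. k \<noteq> l}. prob {\<omega> \<in> space M. P (snd s) \<omega>})
          = real (card W) * expected_count - expected_count"
    using sum_off_diagonal[OF finite_W, of "\<lambda>k l. prob {\<omega> \<in> space M. P k \<omega>}"]
      sum_off_diagonal[OF finite_W, of "\<lambda>k l. prob {\<omega> \<in> space M. P l \<omega>}"]
    by (simp_all add: expected_count_def case_prod_unfold sum_distrib_left)
  moreover have "(real (card W) * expected_count - expected_count) / (real (card W) * (real (card W) - 1))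
      = expected_count / real (card W)"
    using card_W_real by (simp add: field_simps)
  ultimately show "prob {\<omega> \<in> space M. P (fst (Z \<omega>)) \<omega>} = expected_count / real (card W)"
    and "prob {\<omega> \<in> space M. P (snd (Z \<omega>)) \<omega>} = expected_count / real (card W)"
    using prob_at_sample(2)[of fst fst] prob_at_sample(2)[of snd snd] by auto
qed

lemma prob_both_at_sample:
  "prob {\<omega> \<in> space M. P (fst (Z \<omega>)) \<omega> \<and> P (snd (Z \<omega>)) \<omega>}
     = (expected_count_square - expected_count) / (real (card W) * (real (card W) - 1))"
proof -
  have "(\<Sum>s\<in>{(k, l) \<in> W \<times> W. k \<noteq> l}. prob {\<omega> \<in> space M. P (fst s) \<omega> \<and> P (snd s) \<omega>})
          = expected_count_square - expected_count"
    using sum_off_diagonal[OF finite_W, of "\<lambda>k l. prob {\<omega> \<in> space M. P k \<omega> \<and> P l \<omega>}"]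
    by (simp add: expected_count_def expected_count_square_def case_prod_unfold)
  then show ?thesis
    using prob_at_sample(2)[of fst snd] by auto
qed

lemma expectation_empirical_frequency:
  "expectation (empirical_frequency W P) = expected_count / real (card W)"
  using empirical_frequency_moments(2)[of W P, OF finite_W P_events] by (simp add: expected_count_def)

lemma variance_empirical_frequency:
  "variance (empirical_frequency W P)
     = expected_count_square / (real (card W))\<^sup>2 - (expected_count / real (card W))\<^sup>2"
proof -
  note moments = empirical_frequency_moments[of W P, OF finite_W P_events]
  have "\<bar>empirical_frequency W P \<omega>\<bar> \<le> 1" for \<omega>
    using empirical_frequency_bounds[OF finite_W, of P \<omega>] by simp
  then have integrable: "integrable M (empirical_frequency W P)"
      "integrable M (\<lambda>\<omega>. (empirical_frequency W P \<omega>)\<^sup>2)"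
    using moments(1) by (auto intro: integrable_const_bound[where B = 1] integrable_square_if_bounded)
  show ?thesis
    using variance_eq[OF integrable] moments(2,3) by (simp add: expected_count_def expected_count_square_def)
qed

lemma covariance_at_sample:
  "covariance M (\<lambda>\<omega>. of_bool (P (fst (Z \<omega>)) \<omega>)) (\<lambda>\<omega>. of_bool (P (snd (Z \<omega>)) \<omega>))
     = (expected_count_square - expected_count) / (real (card W) * (real (card W) - 1))
       - (expected_count / real (card W))\<^sup>2"
proof -
  note events = prob_at_sample(1)[of fst fst] prob_at_sample(1)[of snd snd] prob_at_sample(1)[of fst snd]
  have "covariance M (\<lambda>\<omega>. of_bool (P (fst (Z \<omega>)) \<omega>)) (\<lambda>\<omega>. of_bool (P (snd (Z \<omega>)) \<omega>))
      = prob {\<omega> \<in> space M. P (fst (Z \<omega>)) \<omega> \<and> P (snd (Z \<omega>)) \<omega>}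
        - prob {\<omega> \<in> space M. P (fst (Z \<omega>)) \<omega>} * prob {\<omega> \<in> space M. P (snd (Z \<omega>)) \<omega>}"
    using expectation_of_bool[OF events(1)] expectation_of_bool[OF events(2)]
      expectation_of_bool[OF events(3)]
    by (subst covariance_eq) (auto simp: of_bool_conj)
  then show ?thesis
    by (simp add: prob_both_at_sample prob_fst_at_sample prob_snd_at_sample power2_eq_square)
qed

theorem abs_covariance_minus_variance_le:
  "\<bar>covariance M (\<lambda>\<omega>. of_bool (P (fst (Z \<omega>)) \<omega>)) (\<lambda>\<omega>. of_bool (P (snd (Z \<omega>)) \<omega>))
     - variance (empirical_frequency W P)\<bar> \<le> 1 / (real (card W) - 1)"
proof -
  define m where "m = real (card W)"
  have "m \<ge> 2" using card_W_real by (simp add: m_def)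
  have "covariance M (\<lambda>\<omega>. of_bool (P (fst (Z \<omega>)) \<omega>)) (\<lambda>\<omega>. of_bool (P (snd (Z \<omega>)) \<omega>))
     - variance (empirical_frequency W P)
      = (expected_count_square - m * expected_count) / (m\<^sup>2 * (m - 1))"
    unfolding covariance_at_sample variance_empirical_frequency m_def[symmetric]
    using \<open>m \<ge> 2\<close> by (simp add: field_simps power2_eq_square)
  moreover have "\<bar>expected_count_square - m * expected_count\<bar> \<le> m\<^sup>2"
  proof -
    have "0 \<le> m * expected_count" "m * expected_count \<le> m * m"
      using expected_count_bounds(1,2) \<open>m \<ge> 2\<close> by (simp_all add: m_def mult_left_mono)
    then show ?thesis
      using expected_count_bounds(3,4) unfolding abs_le_iff power2_eq_square m_def by linarith
  qed
  then have "\<bar>expected_count_square - m * expected_count\<bar> / (m\<^sup>2 * (m - 1)) \<le> m\<^sup>2 / (m\<^sup>2 * (m - 1))"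
    using \<open>m \<ge> 2\<close> by (intro divide_right_mono) auto
  ultimately show ?thesis
    using \<open>m \<ge> 2\<close> by (simp add: abs_divide m_def)
qed

end

section \<open>Degrees of a random graph\<close>

lemma degree_eq_card_edges:
  assumes "finite (V n)" "k \<in> V n" and "\<And>l. l \<in> V n \<Longrightarrow> ch n k l \<omega> \<in> {0, 1}"
  shows "degree V ch n k \<omega> = card {l \<in> V n. (k, l) \<in> edge_set V ch n \<omega>}"
proof -
  have "degree V ch n k \<omega> = (\<Sum>l\<in>V n. of_bool (ch n k l \<omega> = 1))"
    unfolding degree_def using assms(3) by (intro sum.cong) auto
  also have "\<dots> = card {l \<in> V n. (k, l) \<in> edge_set V ch n \<omega>}"
    using assms(1,2) by (simp add: edge_set_def Int_def conj_commute)
  finally show ?thesis .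
qed

context prob_space
begin

lemma degree_events:
  assumes "finite (V n)" "k \<in> V n"
    and chi_rv: "\<And>l. l \<in> V n \<Longrightarrow> ch n k l \<in> measurable M (count_space UNIV)"
  shows "{\<omega> \<in> space M. degree V ch n k \<omega> = d} \<in> events"
proof -
  have "(\<lambda>\<omega>. real (ch n k l \<omega>)) \<in> borel_measurable M" if "l \<in> V n" for l
    using measurable_compose[OF chi_rv[OF that], of real borel] by simp
  then have "(\<lambda>\<omega>. real (degree V ch n k \<omega>)) \<in> borel_measurable M"
    unfolding degree_def of_nat_sum by (intro borel_measurable_sum) auto
  then have "{\<omega> \<in> space M. real (degree V ch n k \<omega>) = real d} \<in> events"
    by measurable
  then show ?thesis by simp
qed

lemma degree_events_indep_pair:
  assumes fin: "finite (V n)"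
    and chi_01: "\<And>k l \<omega>. k \<in> V n \<Longrightarrow> l \<in> V n \<Longrightarrow> \<omega> \<in> space M \<Longrightarrow> ch n k l \<omega> \<in> {0, 1}"
    and pair_indep: "indep_set
                     {{\<omega> \<in> space M. (\<nu> \<omega>, \<mu> \<omega>) \<in> A} | A. A \<subseteq> {(k, l) \<in> V n \<times> V n. k \<noteq> l}}
                     {{\<omega> \<in> space M. edge_set V ch n \<omega> \<in> B} | B. B \<subseteq> Pow (V n \<times> V n)}"
    and "s \<in> {(k, l) \<in> V n \<times> V n. k \<noteq> l}" "k \<in> V n" "l \<in> V n"
  shows "prob {\<omega> \<in> space M. (\<nu> \<omega>, \<mu> \<omega>) = s \<and> degree V ch n k \<omega> = d \<and> degree V ch n l \<omega> = d}
    = prob {\<omega> \<in> space M. (\<nu> \<omega>, \<mu> \<omega>) = s}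
      * prob {\<omega> \<in> space M. degree V ch n k \<omega> = d \<and> degree V ch n l \<omega> = d}"
proof -
  define B where "B = {F. F \<subseteq> V n \<times> V n \<and> card {j \<in> V n. (k, j) \<in> F} = d
                                      \<and> card {j \<in> V n. (l, j) \<in> F} = d}"
  have "degree V ch n j \<omega> = card {i \<in> V n. (j, i) \<in> edge_set V ch n \<omega>}"
    if "j \<in> V n" "\<omega> \<in> space M" for j \<omega>
    using degree_eq_card_edges[of V n j ch \<omega>] fin chi_01 that by blast
  moreover have "edge_set V ch n \<omega> \<subseteq> V n \<times> V n" for \<omega>
    by (auto simp: edge_set_def)
  ultimately have edges: "{\<omega> \<in> space M. degree V ch n k \<omega> = d \<and> degree V ch n l \<omega> = d}
      = {\<omega> \<in> space M. edge_set V ch n \<omega> \<in> B}"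
    using assms(5,6) unfolding B_def by auto
  have "B \<subseteq> Pow (V n \<times> V n)" by (auto simp: B_def)
  then have "prob ({\<omega> \<in> space M. (\<nu> \<omega>, \<mu> \<omega>) \<in> {s}} \<inter> {\<omega> \<in> space M. edge_set V ch n \<omega> \<in> B})
      = prob {\<omega> \<in> space M. (\<nu> \<omega>, \<mu> \<omega>) \<in> {s}} * prob {\<omega> \<in> space M. edge_set V ch n \<omega> \<in> B}"
    using assms(4) by (intro indep_setD[OF pair_indep]) blast+
  moreover have "{\<omega> \<in> space M. (\<nu> \<omega>, \<mu> \<omega>) = s \<and> degree V ch n k \<omega> = d \<and> degree V ch n l \<omega> = d}
      = {\<omega> \<in> space M. (\<nu> \<omega>, \<mu> \<omega>) \<in> {s}}
        \<inter> {\<omega> \<in> space M. degree V ch n k \<omega> = d \<and> degree V ch n l \<omega> = d}"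
    by auto
  ultimately show ?thesis
    unfolding edges by simp
qed

lemma degree_sampling:
  fixes V :: "nat \<Rightarrow> 'v set" and ch :: "nat \<Rightarrow> 'v \<Rightarrow> 'v \<Rightarrow> 'a \<Rightarrow> nat"
    and \<nu> \<mu> :: "'a \<Rightarrow> 'v" and n d :: nat
  assumes fin: "finite (V n)" and card2: "card (V n) \<ge> 2"
    and chi_rv: "\<And>k l. k \<in> V n \<Longrightarrow> l \<in> V n \<Longrightarrow> ch n k l \<in> measurable M (count_space UNIV)"
    and chi_01: "\<And>k l \<omega>. k \<in> V n \<Longrightarrow> l \<in> V n \<Longrightarrow> \<omega> \<in> space M \<Longrightarrow> ch n k l \<omega> \<in> {0, 1}"
    and pair_rv: "(\<lambda>\<omega>. (\<nu> \<omega>, \<mu> \<omega>)) \<in> measurable M (count_space {(k, l) \<in> V n \<times> V n. k \<noteq> l})"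
    and pair_unif: "\<And>k l. k \<in> V n \<Longrightarrow> l \<in> V n \<Longrightarrow> k \<noteq> l \<Longrightarrow>
                   prob {\<omega> \<in> space M. \<nu> \<omega> = k \<and> \<mu> \<omega> = l}
                     = 1 / (real (card (V n)) * (real (card (V n)) - 1))"
    and pair_indep: "indep_set
                     {{\<omega> \<in> space M. (\<nu> \<omega>, \<mu> \<omega>) \<in> A} | A. A \<subseteq> {(k, l) \<in> V n \<times> V n. k \<noteq> l}}
                     {{\<omega> \<in> space M. edge_set V ch n \<omega> \<in> B} | B. B \<subseteq> Pow (V n \<times> V n)}"
  shows "emp_deg V ch n d \<in> borel_measurable M" "\<And>\<omega>. \<bar>emp_deg V ch n d \<omega>\<bar> \<le> 1"
    and "prob {\<omega> \<in> space M. degree V ch n (\<nu> \<omega>) \<omega> = d} = expectation (emp_deg V ch n d)"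
    and "\<bar>covariance M (\<lambda>\<omega>. of_bool (degree V ch n (\<nu> \<omega>) \<omega> = d))
                        (\<lambda>\<omega>. of_bool (degree V ch n (\<mu> \<omega>) \<omega> = d))
          - variance (emp_deg V ch n d)\<bar> \<le> 1 / (real (card (V n)) - 1)"
proof -
  define P where "P k \<omega> \<longleftrightarrow> degree V ch n k \<omega> = d" for k \<omega>
  have freq: "emp_deg V ch n d = empirical_frequency (V n) P"
    by (simp add: fun_eq_iff emp_deg_def empirical_frequency_def P_def)
  have P_events: "{\<omega> \<in> space M. P k \<omega>} \<in> events" if "k \<in> V n" for k
    unfolding P_def using fin that by (rule degree_events) (use that chi_rv in blast)
  have indep: "prob {\<omega> \<in> space M. (\<nu> \<omega>, \<mu> \<omega>) = s \<and> P k \<omega> \<and> P l \<omega>}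
      = prob {\<omega> \<in> space M. (\<nu> \<omega>, \<mu> \<omega>) = s} * prob {\<omega> \<in> space M. P k \<omega> \<and> P l \<omega>}"
    if "s \<in> {(k, l) \<in> V n \<times> V n. k \<noteq> l}" "k \<in> V n" "l \<in> V n" for s k l
    unfolding P_def using fin chi_01 pair_indep that by (rule degree_events_indep_pair)
  interpret uniform_pair_sample M "V n" P "\<lambda>\<omega>. (\<nu> \<omega>, \<mu> \<omega>)"
    using fin card2 P_events pair_rv indep by unfold_locales (auto simp: pair_unif)
  show "emp_deg V ch n d \<in> borel_measurable M"
    unfolding freq using fin P_events by (rule empirical_frequency_moments)
  show "\<bar>emp_deg V ch n d \<omega>\<bar> \<le> 1" for \<omega>
    unfolding freq using empirical_frequency_bounds[OF fin, of P \<omega>] by simp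
  show "prob {\<omega> \<in> space M. degree V ch n (\<nu> \<omega>) \<omega> = d} = expectation (emp_deg V ch n d)"
    using prob_fst_at_sample unfolding freq expectation_empirical_frequency by (simp add: P_def)
  show "\<bar>covariance M (\<lambda>\<omega>. of_bool (degree V ch n (\<nu> \<omega>) \<omega> = d))
                        (\<lambda>\<omega>. of_bool (degree V ch n (\<mu> \<omega>) \<omega> = d))
          - variance (emp_deg V ch n d)\<bar> \<le> 1 / (real (card (V n)) - 1)"
    using abs_covariance_minus_variance_le unfolding freq by (simp add: P_def)
qed

end

theorem proposition4:
  fixes M :: "'a measure"
    and V :: "nat \<Rightarrow> 'v set"
    and ch :: "nat \<Rightarrow> 'v \<Rightarrow> 'v \<Rightarrow> 'a \<Rightarrow> nat"
    and \<nu> \<mu> :: "nat \<Rightarrow> 'a \<Rightarrow> 'v"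
    and d :: nat
    and L :: real
  assumes P: "prob_space M"
    and V_fin: "\<And>n. n \<ge> 2 \<Longrightarrow> finite (V n)"
    and V_card: "\<And>n. n \<ge> 2 \<Longrightarrow> card (V n) \<ge> 2"
    and V_lim: "filterlim (\<lambda>n. card (V n)) at_top sequentially"
    and chi_rv: "\<And>n k l. n \<ge> 2 \<Longrightarrow> k \<in> V n \<Longrightarrow> l \<in> V n \<Longrightarrow>
                   ch n k l \<in> measurable M (count_space UNIV)"
    and chi_01: "\<And>n k l \<omega>. n \<ge> 2 \<Longrightarrow> k \<in> V n \<Longrightarrow> l \<in> V n \<Longrightarrow> \<omega> \<in> space M \<Longrightarrow>
                   ch n k l \<omega> \<in> {0, 1}"
    and pair_rv: "\<And>n. n \<ge> 2 \<Longrightarrow>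
                   (\<lambda>\<omega>. (\<nu> n \<omega>, \<mu> n \<omega>)) \<in> measurable M (count_space {(k, l) \<in> V n \<times> V n. k \<noteq> l})"
    and pair_unif: "\<And>n k l. n \<ge> 2 \<Longrightarrow> k \<in> V n \<Longrightarrow> l \<in> V n \<Longrightarrow> k \<noteq> l \<Longrightarrow>
                   measure M {\<omega> \<in> space M. \<nu> n \<omega> = k \<and> \<mu> n \<omega> = l}
                     = 1 / (real (card (V n)) * (real (card (V n)) - 1))"
    and pair_indep: "\<And>n. n \<ge> 2 \<Longrightarrow>
                   prob_space.indep_set M
                     {{\<omega> \<in> space M. (\<nu> n \<omega>, \<mu> n \<omega>) \<in> A} | A. A \<subseteq> {(k, l) \<in> V n \<times> V n. k \<noteq> l}}
                     {{\<omega> \<in> space M. edge_set V ch n \<omega> \<in> B} | B. B \<subseteq> Pow (V n \<times> V n)}"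
  shows "conv_in_prob M (\<lambda>n. emp_deg V ch n d) L \<longleftrightarrow>
         (\<lambda>n. measure M {\<omega> \<in> space M. degree V ch n (\<nu> n \<omega>) \<omega> = d}) \<longlonglongrightarrow> L \<and>
            (\<lambda>n. covariance M (\<lambda>\<omega>. of_bool (degree V ch n (\<nu> n \<omega>) \<omega> = d))
                                (\<lambda>\<omega>. of_bool (degree V ch n (\<mu> n \<omega>) \<omega> = d))) \<longlonglongrightarrow> 0"
proof -
  interpret prob_space M by (rule P)
  define X where "X n = emp_deg V ch n d" for n
  define p where "p n = prob {\<omega> \<in> space M. degree V ch n (\<nu> n \<omega>) \<omega> = d}" for n
  define cv where "cv n = covariance M (\<lambda>\<omega>. of_bool (degree V ch n (\<nu> n \<omega>) \<omega> = d))
                                       (\<lambda>\<omega>. of_bool (degree V ch n (\<mu> n \<omega>) \<omega> = d))" for n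
  have "X n \<in> borel_measurable M \<and> (\<forall>\<omega>\<in>space M. \<bar>X n \<omega>\<bar> \<le> 1)"
    and "p n = expectation (X n)"
    and "norm (cv n - variance (X n)) \<le> 1 / (real (card (V n)) - 1)" if "n \<ge> 2" for n
    unfolding X_def p_def cv_def
    using degree_sampling[OF V_fin[OF that] V_card[OF that] chi_rv[OF that] chi_01[OF that]
        pair_rv[OF that] pair_unif[OF that] pair_indep[OF that]]
    by auto
  then have bounded: "\<forall>\<^sub>F n in sequentially. X n \<in> borel_measurable M \<and> (\<forall>\<omega>\<in>space M. \<bar>X n \<omega>\<bar> \<le> 1)"
    and mean: "\<forall>\<^sub>F n in sequentially. p n = expectation (X n)"
    and cv_var: "\<forall>\<^sub>F n in sequentially. norm (cv n - variance (X n)) \<le> 1 / (real (card (V n)) - 1)"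
    by (auto intro: eventually_mono[OF eventually_ge_at_top[of 2]])
  have "filterlim (\<lambda>n. real (card (V n)) - 1) at_top sequentially"
    using filterlim_tendsto_add_at_top[OF tendsto_const filterlim_compose[OF filterlim_real_sequentially V_lim], of "-1"]
    by simp
  then have "(\<lambda>n. 1 / (real (card (V n)) - 1)) \<longlonglongrightarrow> 0"
    by (simp add: divide_inverse tendsto_inverse_0_at_top)
  then have cv_minus_var: "(\<lambda>n. cv n - variance (X n)) \<longlonglongrightarrow> 0"
    using cv_var by (rule Lim_null_comparison[rotated])
  then have cv_iff: "cv \<longlonglongrightarrow> 0 \<longleftrightarrow> (\<lambda>n. variance (X n)) \<longlonglongrightarrow> 0"
    using Lim_transform[OF _ cv_minus_var] Lim_transform2[OF _ cv_minus_var] by (intro iffI)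
  have "conv_in_prob M X L \<longleftrightarrow> (\<lambda>n. expectation (\<lambda>\<omega>. (X n \<omega> - L)\<^sup>2)) \<longlonglongrightarrow> 0"
    using bounded by (rule conv_in_prob_iff_mean_square)
  also have "\<dots> \<longleftrightarrow> (\<lambda>n. variance (X n) + (expectation (X n) - L)\<^sup>2) \<longlonglongrightarrow> 0"
    by (intro tendsto_cong eventually_mono[OF bounded] mean_square_eq_variance_plus_bias) auto
  also have "\<dots> \<longleftrightarrow> (\<lambda>n. expectation (X n)) \<longlonglongrightarrow> L \<and> (\<lambda>n. variance (X n)) \<longlonglongrightarrow> 0"
    by (intro tendsto_nonneg_plus_square_iff always_eventually) (simp add: variance_positive)
  also have "\<dots> \<longleftrightarrow> p \<longlonglongrightarrow> L \<and> cv \<longlonglongrightarrow> 0"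
    using tendsto_cong[OF mean] cv_iff by simp
  finally show ?thesis unfolding X_def p_def cv_def .
qed

end
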